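(* Let $J_1,J_2$ be abelian topological semigroups and $n\in\mathbf{Z}_+$. If $P^n(J_1)$ is finite dimensional, then $P^n(J_1\times J_2)=\sum_{m=0}^n P^m(J_1)\otimes P^{n-m}(J_2)$, i.e. every $p\in P^n(J_1\times J_2)$ is a finite sum of functions $(s,t)\mapsto f(s)g(t)$ with $f\in P^m(J_1)$, $g\in P^{n-m}(J_2)$ for some $0\le m\le n$, and every such sum lies in $P^n(J_1\times J_2)$.
   Context: $\mathbf{Z}_+=\{0,1,2,\dots\}$. For an abelian topological semigroup $S$, a continuous $p:S\to\mathbf{C}$ is a polynomial of degree at most $n$ if for all $s,t\in S$ the map $m\mapsto p(s+mt)$, $m\in\mathbf{Z}_+$, is a polynomial in $m$ of degree at most $n$; $P^n(S)$ is the space of these. $J_1\times J_2$ carries the product topology and componentwise operation. *)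

theory Defs
  imports "HOL-Analysis.Analysis" "HOL-Library.Product_Plus"
begin

definition top_ab_semigroup :: "'a::{topological_space, ab_semigroup_add} itself \<Rightarrow> bool" where
  "top_ab_semigroup _ \<longleftrightarrow> continuous_on UNIV (\<lambda>z::'a \<times> 'a. fst z + snd z)"

definition add_mult :: "'a::ab_semigroup_add \<Rightarrow> nat \<Rightarrow> 'a \<Rightarrow> 'a" where
  "add_mult s m t = ((\<lambda>x. x + t) ^^ m) s"

definition Pn :: "nat \<Rightarrow> ('a::{topological_space, ab_semigroup_add} \<Rightarrow> complex) set" where
  "Pn n = {p. continuous_on UNIV p \<and>
     (\<forall>s t. \<exists>c::nat \<Rightarrow> complex. \<forall>m::nat. p (add_mult s m t) = (\<Sum>k\<le>n. c k * of_nat m ^ k))}"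

definition fin_dim_fun :: "('a \<Rightarrow> complex) set \<Rightarrow> bool" where
  "fin_dim_fun V \<longleftrightarrow> (\<exists>F. finite F \<and>
     (\<forall>p\<in>V. \<exists>c::('a \<Rightarrow> complex) \<Rightarrow> complex. p = (\<lambda>x. \<Sum>f\<in>F. c f * f x)))"

definition tensor_sum :: "nat \<Rightarrow> ('a::{topological_space, ab_semigroup_add} \<times> 'b::{topological_space, ab_semigroup_add} \<Rightarrow> complex) set" where
  "tensor_sum n = {p. \<exists>(N::nat) (m::nat \<Rightarrow> nat) (f::nat \<Rightarrow> 'a \<Rightarrow> complex) (g::nat \<Rightarrow> 'b \<Rightarrow> complex).
     (\<forall>i<N. m i \<le> n \<and> f i \<in> Pn (m i) \<and> g i \<in> Pn (n - m i)) \<and>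
     p = (\<lambda>(s, t). \<Sum>i<N. f i s * g i t)}"

end

theory Submission
  imports Defs "HOL-Computational_Algebra.Polynomial"
begin

text \<open>A continuous \<open>p\<close> lies in \<open>P^n\<close> iff its \<open>(n+1)\<close>-st differences along every translation
  vanish. A difference along a translation \<open>\<sigma>\<close> lowers the degree, since the grid
  \<open>(i, j) \<mapsto> f (s + i \<sigma> + j t)\<close> is polynomial on rows, columns and rays through the origin,
  which forces total degree at most \<open>n\<close>. The same then holds for differences along any map that
  commutes with translations and moves points within their translation orbits, in particular for
  differences in one coordinate of \<open>J1 \<times> J2\<close>; so the slices \<open>p (-, y)\<close> lie in \<open>P^n(J1)\<close>.

  We lower the degree \<open>d\<close> of the slices by induction. As \<open>P^d(J1)\<close> is finite dimensional and
  functionals \<open>f \<mapsto> (\<Delta>\<^sub>t^d f)(x)\<close> separate it from \<open>P^(d-1)(J1)\<close>, there are combinations \<open>l_i\<close> of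
  point evaluations vanishing on \<open>P^(d-1)(J1)\<close> and \<open>w_i \<in> P^d(J1)\<close> with
  \<open>f - \<Sum> l_i(f) w_i \<in> P^(d-1)(J1)\<close> for all \<open>f \<in> P^d(J1)\<close>. Then \<open>y \<mapsto> l_i (p (-, y))\<close> lies in
  \<open>P^(n-d)(J2)\<close>, because \<open>n-d+1\<close> differences in the second coordinate push the slices into
  \<open>P^(d-1)(J1)\<close>, and subtracting \<open>\<Sum> w_i(x) l_i (p (-, y))\<close> from \<open>p\<close> lowers the degree of the
  slices.\<close>

section \<open>Polynomial sequences\<close>

definition fdiff :: "(nat \<Rightarrow> 'a::ab_group_add) \<Rightarrow> nat \<Rightarrow> 'a" where
  "fdiff u m = u (Suc m) - u m"

definition poly_seq :: "nat \<Rightarrow> (nat \<Rightarrow> 'a::comm_semiring_1) \<Rightarrow> bool" where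
  "poly_seq n u \<longleftrightarrow> (\<exists>P. degree P \<le> n \<and> (\<forall>m. u m = poly P (of_nat m)))"

lemma poly_seq_poly: "degree P \<le> n \<Longrightarrow> poly_seq n (\<lambda>m. poly P (of_nat m))"
  unfolding poly_seq_def by blast

lemma poly_seq_mono: "poly_seq a u \<Longrightarrow> a \<le> b \<Longrightarrow> poly_seq b u"
  unfolding poly_seq_def by (meson order_trans)

lemma poly_seq_add: "poly_seq n u \<Longrightarrow> poly_seq n v \<Longrightarrow> poly_seq n (\<lambda>m. u m + v m)"
  unfolding poly_seq_def by (metis degree_add_le poly_add)

lemma poly_seq_cmult: "poly_seq n u \<Longrightarrow> poly_seq n (\<lambda>m. c * u m)"
  unfolding poly_seq_def by (metis degree_smult_le order_trans poly_smult)

lemma poly_seq_mult: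
  fixes u v :: "nat \<Rightarrow> 'a::comm_semiring_1"
  shows "poly_seq a u \<Longrightarrow> poly_seq b v \<Longrightarrow> poly_seq (a + b) (\<lambda>m. u m * v m)"
  unfolding poly_seq_def by (metis add_mono degree_mult_le order_trans poly_mult)

lemma poly_eq_sum_coeffs:
  fixes P :: "'a::comm_semiring_1 poly"
  assumes "degree P \<le> n"
  shows "poly P x = (\<Sum>k\<le>n. coeff P k * x ^ k)"
proof -
  have "poly P x = poly (\<Sum>k\<le>n. monom (coeff P k) k) x"
    using poly_as_sum_of_monoms'[OF assms] by simp
  then show ?thesis by (simp add: poly_sum poly_monom)
qed

lemma poly_seq_iff_coeffs:
  "poly_seq n u \<longleftrightarrow> (\<exists>c. \<forall>m. u m = (\<Sum>k\<le>n. c k * of_nat m ^ k))"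
proof
  assume "poly_seq n u"
  then obtain P where "degree P \<le> n" "\<And>m. u m = poly P (of_nat m)"
    unfolding poly_seq_def by blast
  then show "\<exists>c. \<forall>m. u m = (\<Sum>k\<le>n. c k * of_nat m ^ k)"
    using poly_eq_sum_coeffs by metis
next
  assume "\<exists>c. \<forall>m. u m = (\<Sum>k\<le>n. c k * of_nat m ^ k)"
  then obtain c where c: "\<And>m. u m = (\<Sum>k\<le>n. c k * of_nat m ^ k)" by blast
  have "degree (\<Sum>k\<le>n. monom (c k) k) \<le> n"
    by (intro degree_sum_le) (auto intro: order_trans[OF degree_monom_le])
  moreover have "u m = poly (\<Sum>k\<le>n. monom (c k) k) (of_nat m)" for m
    by (simp add: c poly_sum poly_monom)
  ultimately show "poly_seq n u" unfolding poly_seq_def by blast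
qed

lemma poly_eq_if_eq_on_nats:
  fixes P Q :: "'a::{idom, ring_char_0} poly"
  assumes "\<And>m. poly P (of_nat m) = poly Q (of_nat m)"
  shows "P = Q"
proof (rule ccontr)
  assume "P \<noteq> Q"
  then have "finite {x. poly (P - Q) x = 0}" by (intro poly_roots_finite) simp
  moreover have "range of_nat \<subseteq> {x. poly (P - Q) x = 0}" using assms by auto
  ultimately have "finite (range (of_nat :: nat \<Rightarrow> 'a))" by (rule finite_subset[rotated])
  then show False using finite_imageD[OF _ inj_of_nat] by auto
qed

lemma fdiff_pow_Suc: "(fdiff ^^ Suc k) u m = (fdiff ^^ k) u (Suc m) - (fdiff ^^ k) u m"
  by (simp add: fdiff_def)

lemma fdiff_pow_diff: "(fdiff ^^ k) (\<lambda>m. u m - v m) m = (fdiff ^^ k) u m - (fdiff ^^ k) v m"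
  by (induction k arbitrary: m) (simp_all add: fdiff_pow_Suc del: funpow.simps)

lemma poly_seq_fdiff:
  fixes u :: "nat \<Rightarrow> 'a::idom"
  assumes "poly_seq (Suc n) u"
  shows "poly_seq n (fdiff u)"
proof -
  obtain P where P: "degree P \<le> Suc n" "\<And>m. u m = poly P (of_nat m)"
    using assms unfolding poly_seq_def by blast
  define Q where "Q = pcompose P [:1, 1:] - P"
  have dQ: "degree Q \<le> Suc n"
    unfolding Q_def by (intro degree_diff_le) (simp_all add: degree_pcompose P(1))
  have "coeff (pcompose P [:1, 1:]) (Suc n) = coeff P (Suc n)"
  proof (cases "degree P = Suc n")
    case True
    then show ?thesis using lead_coeff_comp[of "[:1, 1:]" P] by (simp add: degree_pcompose)
  next
    case False
    then show ?thesis using P(1) by (simp add: coeff_eq_0 degree_pcompose)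
  qed
  then have "degree Q \<le> n" using coeff_0_degree_minus_1[OF _ dQ] by (simp add: Q_def)
  moreover have "fdiff u m = poly Q (of_nat m)" for m
    by (simp add: Q_def fdiff_def P(2) poly_pcompose algebra_simps)
  ultimately show ?thesis unfolding poly_seq_def by blast
qed

lemma fdiff_pow_poly_seq:
  fixes u :: "nat \<Rightarrow> 'a::idom"
  shows "poly_seq n u \<Longrightarrow> (fdiff ^^ Suc n) u m = 0"
proof (induction n arbitrary: u)
  case 0
  then obtain a where "\<And>m. u m = poly [:a:] (of_nat m)"
    unfolding poly_seq_def by (metis degree_eq_zeroE le_zero_eq)
  then show ?case by (simp add: fdiff_def)
next
  case (Suc n)
  show ?case
    using Suc.IH[OF poly_seq_fdiff[OF Suc.prems]] by (simp only: funpow_Suc_right o_apply)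
qed

lemma fdiff_zero_imp_const:
  "(\<And>m. fdiff u m = 0) \<Longrightarrow> u m = u 0"
  by (induction m) (metis fdiff_def right_minus_eq)+

lemma fdiff_pow_zero_vanishing:
  assumes "\<And>m. (fdiff ^^ Suc N) u m = 0" "\<And>m. m \<le> N \<Longrightarrow> u m = 0"
  shows "u m = 0"
  using assms
proof (induction N arbitrary: u m)
  case 0
  then show ?case using fdiff_zero_imp_const[of u m] by simp
next
  case (Suc N)
  have "fdiff u m = 0" for m
  proof (rule Suc.IH)
    show "(fdiff ^^ Suc N) (fdiff u) m = 0" for m
      using Suc.prems(1) by (simp only: funpow_Suc_right o_apply)
    show "fdiff u m = 0" if "m \<le> N" for m
      using that Suc.prems(2) by (simp add: fdiff_def)
  qed
  then show ?case using fdiff_zero_imp_const[of u m] Suc.prems(2)[of 0] by simp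
qed

definition lagrange_basis :: "nat \<Rightarrow> nat \<Rightarrow> 'a::field_char_0 poly" where
  "lagrange_basis N r = smult (inverse (\<Prod>s\<in>{..N} - {r}. of_nat r - of_nat s))
                              (\<Prod>s\<in>{..N} - {r}. [:- of_nat s, 1:])"

lemma degree_lagrange_basis: "r \<le> N \<Longrightarrow> degree (lagrange_basis N r) \<le> N"
proof -
  assume "r \<le> N"
  have "degree (\<Prod>s\<in>{..N} - {r}. [:- of_nat s, 1::'a:]) \<le> card ({..N} - {r})"
    using degree_prod_sum_le[of "{..N} - {r}" "\<lambda>s. [:- of_nat s, 1::'a:]"] by simp
  also have "\<dots> \<le> N" using \<open>r \<le> N\<close> by (simp add: card_Diff_singleton)
  finally show ?thesis
    unfolding lagrange_basis_def using degree_smult_le order_trans by blast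
qed

lemma degree_lagrange_sum: "degree (\<Sum>r\<le>N. smult (c r) (lagrange_basis N r)) \<le> N"
  using degree_lagrange_basis
  by (intro degree_sum_le) (auto intro: order_trans[OF degree_smult_le])

lemma poly_lagrange_basis:
  assumes "r \<le> N" "j \<le> N"
  shows "poly (lagrange_basis N r) (of_nat j :: 'a::field_char_0) = (if j = r then 1 else 0)"
proof (cases "j = r")
  case True
  have "(\<Prod>s\<in>{..N} - {r}. (of_nat r - of_nat s :: 'a)) \<noteq> 0"
    by (subst prod_zero_iff) auto
  then show ?thesis using True by (simp add: lagrange_basis_def poly_prod)
next
  case False
  then have "(\<Prod>s\<in>{..N} - {r}. poly [:- of_nat s, 1:] (of_nat j :: 'a)) = 0"
    using assms by (intro prod_zero) auto
  then show ?thesis using False by (simp add: lagrange_basis_def poly_prod)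
qed

lemma fdiff_pow_zero_imp_lagrange:
  fixes u :: "nat \<Rightarrow> 'a::field_char_0"
  assumes "\<And>m. (fdiff ^^ Suc N) u m = 0"
  shows "u m = (\<Sum>r\<le>N. u r * poly (lagrange_basis N r) (of_nat m))"
proof -
  define P where "P = (\<Sum>r\<le>N. smult (u r) (lagrange_basis N r))"
  have "degree P \<le> N"
    unfolding P_def by (rule degree_lagrange_sum)
  have "u m - poly P (of_nat m) = 0"
  proof (rule fdiff_pow_zero_vanishing[where u = "\<lambda>m. u m - poly P (of_nat m)"])
    show "(fdiff ^^ Suc N) (\<lambda>m. u m - poly P (of_nat m)) m = 0" for m
      using assms fdiff_pow_poly_seq[OF poly_seq_poly[OF \<open>degree P \<le> N\<close>]]
      by (simp add: fdiff_pow_diff del: funpow.simps)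
    show "u m - poly P (of_nat m) = 0" if "m \<le> N" for m
    proof -
      have "poly P (of_nat m) = (\<Sum>r\<le>N. if r = m then u r else 0)"
        unfolding P_def poly_sum using that by (intro sum.cong) (auto simp: poly_lagrange_basis)
      then show ?thesis using that by simp
    qed
  qed
  then show ?thesis by (simp add: P_def poly_sum)
qed

lemma poly_seq_iff_fdiff_pow:
  fixes u :: "nat \<Rightarrow> 'a::field_char_0"
  shows "poly_seq N u \<longleftrightarrow> (\<forall>m. (fdiff ^^ Suc N) u m = 0)"
proof
  assume fd: "\<forall>m. (fdiff ^^ Suc N) u m = 0"
  have "u m = poly (\<Sum>r\<le>N. smult (u r) (lagrange_basis N r)) (of_nat m)" for m
    unfolding poly_sum poly_smult by (rule fdiff_pow_zero_imp_lagrange) (use fd in blast)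
  moreover have "degree (\<Sum>r\<le>N. smult (u r) (lagrange_basis N r)) \<le> N"
    by (rule degree_lagrange_sum)
  ultimately show "poly_seq N u" unfolding poly_seq_def by blast
qed (use fdiff_pow_poly_seq in blast)

section \<open>Polynomials on the grid \<open>\<nat> \<times> \<nat>\<close>\<close>

lemma grid_poly_expansion:
  fixes G :: "nat \<Rightarrow> nat \<Rightarrow> 'a::field_char_0"
  assumes rows: "\<And>i. poly_seq N (G i)" and cols: "\<And>j. poly_seq N (\<lambda>i. G i j)"
  obtains \<Phi> where "\<And>a. degree (\<Phi> a) \<le> N"
    "\<And>i j. G i j = (\<Sum>a\<le>N. of_nat i ^ a * poly (\<Phi> a) (of_nat j))"
proof -
  obtain C where C: "\<And>j. degree (C j) \<le> N" "\<And>i j. G i j = poly (C j) (of_nat i)"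
    using cols unfolding poly_seq_def by metis
  define \<Phi> where "\<Phi> a = (\<Sum>r\<le>N. smult (coeff (C r) a) (lagrange_basis N r))" for a
  show thesis
  proof
    show "degree (\<Phi> a) \<le> N" for a
      unfolding \<Phi>_def by (rule degree_lagrange_sum)
    show "G i j = (\<Sum>a\<le>N. of_nat i ^ a * poly (\<Phi> a) (of_nat j))" for i j
    proof -
      have "G i j = (\<Sum>r\<le>N. G i r * poly (lagrange_basis N r) (of_nat j))"
        using rows[of i] by (intro fdiff_pow_zero_imp_lagrange) (simp add: poly_seq_iff_fdiff_pow)
      also have "\<dots> = (\<Sum>r\<le>N. \<Sum>a\<le>N. coeff (C r) a * of_nat i ^ a * poly (lagrange_basis N r) (of_nat j))"
        by (simp add: C(2) poly_eq_sum_coeffs[OF C(1)] sum_distrib_right)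
      also have "\<dots> = (\<Sum>a\<le>N. of_nat i ^ a * poly (\<Phi> a) (of_nat j))"
        by (subst sum.swap) (simp add: \<Phi>_def poly_sum sum_distrib_left mult_ac)
      finally show ?thesis .
    qed
  qed
qed

text \<open>If a grid polynomial of bidegree at most \<open>(N, N)\<close> has degree at most \<open>N\<close> along every
  ray \<open>(c m, m)\<close>, then its total degree is at most \<open>N\<close>.\<close>

lemma grid_poly_coeff_vanish:
  fixes \<Phi> :: "nat \<Rightarrow> 'a::field_char_0 poly"
  assumes deg: "\<And>a. degree (\<Phi> a) \<le> N"
    and rays: "\<And>c. poly_seq N (\<lambda>m. \<Sum>a\<le>N. of_nat (c * m) ^ a * poly (\<Phi> a) (of_nat m))"
    and "a \<le> N" "N < a + b"
  shows "coeff (\<Phi> a) b = 0"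
proof -
  define k where "k = a + b"
  \<comment> \<open>\<open>poly Z c\<close> is the coefficient of \<open>m ^ k\<close> in the ray polynomial \<open>H\<close> of slope \<open>c\<close>.\<close>
  define Z where "Z = (\<Sum>a'\<le>N. monom (coeff (\<Phi> a') (k - a')) a')"
  have "poly Z (of_nat c) = 0" for c
  proof -
    define H where "H = (\<Sum>a'\<le>N. monom (of_nat c ^ a') a' * \<Phi> a')"
    obtain Q where Q: "degree Q \<le> N"
      "\<And>m. (\<Sum>a\<le>N. of_nat (c * m) ^ a * poly (\<Phi> a) (of_nat m)) = poly Q (of_nat m)"
      using rays[of c] unfolding poly_seq_def by metis
    have "H = Q"
      by (rule poly_eq_if_eq_on_nats)
        (simp add: H_def Q(2)[symmetric] poly_sum poly_monom power_mult_distrib mult_ac)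
    then have "coeff H k = 0"
      using Q(1) \<open>N < a + b\<close> by (simp add: k_def coeff_eq_0)
    moreover have "coeff H k = poly Z (of_nat c)"
      unfolding H_def Z_def k_def coeff_sum coeff_monom_mult poly_sum poly_monom
      using \<open>N < a + b\<close> by (intro sum.cong) (auto simp: mult.commute)
    ultimately show ?thesis by simp
  qed
  then have "Z = 0"
    using poly_eq_if_eq_on_nats[of Z 0] by simp
  then have "coeff Z a = 0" by simp
  then show ?thesis
    using \<open>a \<le> N\<close> by (simp add: Z_def k_def coeff_sum)
qed

lemma poly_seq_grid_diff:
  fixes G :: "nat \<Rightarrow> nat \<Rightarrow> 'a::field_char_0"
  assumes rows: "\<And>i. poly_seq (Suc n) (G i)" and cols: "\<And>j. poly_seq (Suc n) (\<lambda>i. G i j)"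
    and rays: "\<And>c. poly_seq (Suc n) (\<lambda>m. G (c * m) m)"
  shows "poly_seq n (\<lambda>j. G 1 j - G 0 j)"
proof -
  obtain \<Phi> where deg: "\<And>a. degree (\<Phi> a) \<le> Suc n"
    and G: "\<And>i j. G i j = (\<Sum>a\<le>Suc n. of_nat i ^ a * poly (\<Phi> a) (of_nat j))"
    using grid_poly_expansion[OF rows cols] by blast
  have rays': "\<And>c. poly_seq (Suc n) (\<lambda>m. \<Sum>a\<le>Suc n. of_nat (c * m) ^ a * poly (\<Phi> a) (of_nat m))"
    using rays by (simp only: G)
  have "degree (\<Phi> (Suc a)) \<le> n" if "a \<le> n" for a
    using that grid_poly_coeff_vanish[OF deg rays'] by (intro degree_le) auto
  then have "degree (\<Sum>a\<le>n. \<Phi> (Suc a)) \<le> n"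
    by (intro degree_sum_le) auto
  moreover have "G 1 j - G 0 j = poly (\<Sum>a\<le>n. \<Phi> (Suc a)) (of_nat j)" for j
    unfolding G sum.atMost_Suc_shift by (simp add: poly_sum del: sum.atMost_Suc)
  ultimately show ?thesis
    unfolding poly_seq_def by blast
qed

section \<open>Polynomial functions on a semigroup\<close>

lemma add_mult_0 [simp]: "add_mult s 0 t = s"
  by (simp add: add_mult_def)

lemma add_mult_Suc: "add_mult s (Suc m) t = add_mult s m t + t"
  by (simp add: add_mult_def)

lemma add_mult_add_left: "add_mult (s + a) m t = add_mult s m t + a"
  by (induction m) (simp_all add: add_mult_Suc ac_simps)

lemma add_mult_add_count: "add_mult s (i + j) t = add_mult (add_mult s i t) j t"
  by (induction j) (simp_all add: add_mult_Suc)

lemma add_mult_commute: "add_mult (add_mult s i a) j b = add_mult (add_mult s j b) i a"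
  by (induction j) (simp_all add: add_mult_Suc add_mult_add_left)

lemma add_mult_add_step: "add_mult s m (a + b) = add_mult (add_mult s m a) m b"
proof (induction m)
  case (Suc m)
  have "add_mult s (Suc m) (a + b) = add_mult (add_mult s m a) m b + (a + b)"
    by (simp only: add_mult_Suc Suc.IH)
  also have "\<dots> = add_mult (add_mult s (Suc m) a) (Suc m) b"
    by (simp only: add_mult_Suc add_mult_add_left) (simp add: ac_simps)
  finally show ?case .
qed simp

lemma add_mult_Suc_left: "add_mult y (Suc k) a = y + add_mult a k a"
proof -
  have "add_mult y (Suc k) a = add_mult (y + a) k a"
    using add_mult_add_count[of y 1 k a] by (simp add: add_mult_Suc)
  also have "\<dots> = add_mult (a + y) k a" by (simp add: ac_simps)
  also have "\<dots> = y + add_mult a k a" by (simp add: add_mult_add_left ac_simps)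
  finally show ?thesis .
qed

lemma add_mult_add_mult_step: "add_mult s m (add_mult a k a) = add_mult s (m * Suc k) a"
proof (induction m)
  case (Suc m)
  have "add_mult s (Suc m) (add_mult a k a) = add_mult s (m * Suc k) a + add_mult a k a"
    by (simp add: add_mult_Suc Suc.IH)
  also have "\<dots> = add_mult (add_mult s (m * Suc k) a) (Suc k) a"
    by (simp only: add_mult_Suc_left)
  also have "\<dots> = add_mult s (Suc m * Suc k) a"
    by (simp only: add_mult_add_count[symmetric]) (simp add: ac_simps)
  finally show ?case .
qed simp

lemma add_mult_Pair: "add_mult (s1, s2) m (t1, t2) = (add_mult s1 m t1, add_mult s2 m t2)"
  by (induction m) (simp_all add: add_mult_Suc)

definition diff_along :: "('a \<Rightarrow> 'a) \<Rightarrow> ('a \<Rightarrow> 'b::ab_group_add) \<Rightarrow> 'a \<Rightarrow> 'b" where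
  "diff_along \<phi> f x = f (\<phi> x) - f x"

lemma diff_along_pow_Suc:
  "(diff_along \<phi> ^^ Suc k) f x = (diff_along \<phi> ^^ k) f (\<phi> x) - (diff_along \<phi> ^^ k) f x"
  by (simp add: diff_along_def)

lemma diff_along_commute:
  assumes "\<And>x. \<phi> (\<psi> x) = \<psi> (\<phi> x)"
  shows "diff_along \<phi> (diff_along \<psi> f) = diff_along \<psi> (diff_along \<phi> f)"
  by (simp add: fun_eq_iff diff_along_def assms algebra_simps)

lemma diff_along_pow_commute:
  assumes "\<And>x. \<phi> (\<psi> x) = \<psi> (\<phi> x)"
  shows "(diff_along \<phi> ^^ k) (diff_along \<psi> f) = diff_along \<psi> ((diff_along \<phi> ^^ k) f)"
  by (induction k) (simp_all add: diff_along_commute[of \<phi> \<psi>, OF assms])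

lemma diff_along_pow_add_mult:
  "(diff_along (\<lambda>x. x + t) ^^ k) f (add_mult s m t) = (fdiff ^^ k) (\<lambda>m. f (add_mult s m t)) m"
proof (induction k arbitrary: m)
  case (Suc k)
  have "(diff_along (\<lambda>x. x + t) ^^ Suc k) f (add_mult s m t)
      = (diff_along (\<lambda>x. x + t) ^^ k) f (add_mult s (Suc m) t) - (diff_along (\<lambda>x. x + t) ^^ k) f (add_mult s m t)"
    by (simp only: diff_along_pow_Suc add_mult_Suc)
  then show ?case
    by (simp only: Suc.IH fdiff_pow_Suc)
qed simp

definition poly_fun :: "nat \<Rightarrow> ('a::ab_semigroup_add \<Rightarrow> 'b::ab_group_add) \<Rightarrow> bool" where
  "poly_fun n f \<longleftrightarrow> (\<forall>t x. (diff_along (\<lambda>x. x + t) ^^ Suc n) f x = 0)"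

lemma poly_fun_iff_rays:
  fixes f :: "'a::ab_semigroup_add \<Rightarrow> 'b::field_char_0"
  shows "poly_fun n f \<longleftrightarrow> (\<forall>s t. poly_seq n (\<lambda>m. f (add_mult s m t)))"
proof -
  have "(\<forall>s t. poly_seq n (\<lambda>m. f (add_mult s m t)))
      \<longleftrightarrow> (\<forall>s t m. (diff_along (\<lambda>x. x + t) ^^ Suc n) f (add_mult s m t) = 0)"
    by (simp only: poly_seq_iff_fdiff_pow diff_along_pow_add_mult)
  then show ?thesis
    unfolding poly_fun_def by (metis add_mult_0)
qed

lemma Pn_iff: "p \<in> Pn n \<longleftrightarrow> continuous_on UNIV p \<and> poly_fun n p"
  unfolding Pn_def poly_fun_iff_rays poly_seq_iff_coeffs by simp

text \<open>The grid \<open>(i, j) \<mapsto> f (s + i \<sigma> + j t)\<close> is polynomial along its rows, columns and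
  rays from the origin, the ray of slope \<open>c\<close> being the ray of \<open>f\<close> in direction \<open>c \<sigma> + t\<close>.\<close>

lemma poly_fun_diff_translation:
  fixes f :: "'a::ab_semigroup_add \<Rightarrow> 'b::field_char_0"
  assumes "poly_fun (Suc n) f"
  shows "poly_fun n (diff_along (\<lambda>x. x + \<sigma>) f)"
  unfolding poly_fun_iff_rays
proof (intro allI)
  fix s t
  have rays: "\<And>s t. poly_seq (Suc n) (\<lambda>m. f (add_mult s m t))"
    using assms unfolding poly_fun_iff_rays by blast
  define G where "G i j = f (add_mult (add_mult s i \<sigma>) j t)" for i j
  have "poly_seq n (\<lambda>j. G 1 j - G 0 j)"
  proof (rule poly_seq_grid_diff)
    show "poly_seq (Suc n) (G i)" for i
      unfolding G_def by (rule rays)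
    show "poly_seq (Suc n) (\<lambda>i. G i j)" for j
      unfolding G_def add_mult_commute[of s _ \<sigma> j t] by (rule rays)
    show "poly_seq (Suc n) (\<lambda>m. G (c * m) m)" for c
    proof (cases c)
      case (Suc k)
      have "G (c * m) m = f (add_mult s m (add_mult \<sigma> k \<sigma> + t))" for m
        by (simp add: G_def Suc add_mult_add_step add_mult_add_mult_step mult.commute)
      then show ?thesis by (simp add: rays)
    qed (simp add: G_def rays)
  qed
  moreover have "G 1 j - G 0 j = diff_along (\<lambda>x. x + \<sigma>) f (add_mult s j t)" for j
    by (simp add: G_def diff_along_def add_mult_Suc[of s 0, simplified] add_mult_add_left)
  ultimately show "poly_seq n (\<lambda>m. diff_along (\<lambda>x. x + \<sigma>) f (add_mult s m t))" by simp
qed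

lemma poly_fun_diff_along_pow:
  fixes p :: "'a::ab_semigroup_add \<Rightarrow> 'b::ab_group_add"
  assumes step: "\<And>k (q :: 'a \<Rightarrow> 'b). poly_fun (Suc k) q \<Longrightarrow> poly_fun k (diff_along \<phi> q)"
  shows "poly_fun (e + m) p \<Longrightarrow> poly_fun m ((diff_along \<phi> ^^ e) p)"
proof (induction e arbitrary: p)
  case (Suc e)
  have "poly_fun (e + m) (diff_along \<phi> p)"
    using step[of "e + m" p] Suc.prems by simp
  then have "poly_fun m ((diff_along \<phi> ^^ e) (diff_along \<phi> p))"
    by (rule Suc.IH)
  then show ?case by (simp only: funpow_Suc_right o_apply)
qed simp

definition translation_like :: "('a::ab_semigroup_add \<Rightarrow> 'a) \<Rightarrow> bool" where
  "translation_like \<phi> \<longleftrightarrow> (\<forall>x t. \<phi> (x + t) = \<phi> x + t) \<and> (\<forall>x. \<exists>t t'. \<phi> x + t = x + t')"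

lemma diff_along_translation_like_poly_fun_0:
  assumes "translation_like \<phi>" "poly_fun 0 q"
  shows "diff_along \<phi> q x = 0"
proof -
  have inv: "q (y + t) = q y" for y t
    using assms(2) by (simp add: poly_fun_def diff_along_def)
  obtain t t' where "\<phi> x + t = x + t'"
    using assms(1) unfolding translation_like_def by blast
  then have "q (\<phi> x) = q x" by (metis inv)
  then show ?thesis by (simp add: diff_along_def)
qed

text \<open>A difference along \<open>\<phi>\<close> commutes with all differences along translations, and kills
  their translation invariant results.\<close>

lemma poly_fun_diff_translation_like:
  fixes p :: "'a::ab_semigroup_add \<Rightarrow> 'b::field_char_0"
  assumes "translation_like \<phi>" "poly_fun (Suc n) p"
  shows "poly_fun n (diff_along \<phi> p)"
  unfolding poly_fun_def
proof (intro allI)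
  fix t x
  have "poly_fun 0 ((diff_along (\<lambda>x. x + t) ^^ Suc n) p)"
    using poly_fun_diff_along_pow[OF poly_fun_diff_translation, of "Suc n" 0] assms(2) by simp
  then have "diff_along \<phi> ((diff_along (\<lambda>x. x + t) ^^ Suc n) p) x = 0"
    by (rule diff_along_translation_like_poly_fun_0[OF assms(1)])
  moreover have "\<phi> (y + t) = \<phi> y + t" for y
    using assms(1) unfolding translation_like_def by blast
  ultimately show "(diff_along (\<lambda>x. x + t) ^^ Suc n) (diff_along \<phi> p) x = 0"
    by (simp only: diff_along_pow_commute)
qed

lemma diff_along_pow_poly_fun:
  fixes p :: "'a::ab_semigroup_add \<Rightarrow> 'b::field_char_0"
  assumes "translation_like \<phi>" "poly_fun n p"
  shows "(diff_along \<phi> ^^ Suc n) p x = 0"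
proof -
  have "poly_fun 0 ((diff_along \<phi> ^^ n) p)"
    using poly_fun_diff_along_pow[OF poly_fun_diff_translation_like[OF assms(1)], of n 0] assms(2)
    by simp
  then show ?thesis
    using diff_along_translation_like_poly_fun_0[OF assms(1)] by simp
qed

section \<open>Functions on a product\<close>

definition shift_fst :: "'a::plus \<Rightarrow> 'a \<times> 'b \<Rightarrow> 'a \<times> 'b" where
  "shift_fst t z = (fst z + t, snd z)"

definition shift_snd :: "'b::plus \<Rightarrow> 'a \<times> 'b \<Rightarrow> 'a \<times> 'b" where
  "shift_snd t z = (fst z, snd z + t)"

lemma translation_like_shift_fst:
  "translation_like (shift_fst t :: 'a::ab_semigroup_add \<times> 'b::ab_semigroup_add \<Rightarrow> _)"
  unfolding translation_like_def
proof (intro conjI allI)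
  fix z \<tau> :: "'a \<times> 'b"
  show "shift_fst t (z + \<tau>) = shift_fst t z + \<tau>"
    by (simp add: shift_fst_def prod_eq_iff ac_simps)
  have "shift_fst t z + (t, snd z) = z + (t + t, snd z)"
    by (simp add: shift_fst_def prod_eq_iff ac_simps)
  then show "\<exists>\<tau> \<tau>'. shift_fst t z + \<tau> = z + \<tau>'" by blast
qed

lemma translation_like_shift_snd:
  "translation_like (shift_snd t :: 'a::ab_semigroup_add \<times> 'b::ab_semigroup_add \<Rightarrow> _)"
  unfolding translation_like_def
proof (intro conjI allI)
  fix z \<tau> :: "'a \<times> 'b"
  show "shift_snd t (z + \<tau>) = shift_snd t z + \<tau>"
    by (simp add: shift_snd_def prod_eq_iff ac_simps)
  have "shift_snd t z + (fst z, t) = z + (fst z, t + t)"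
    by (simp add: shift_snd_def prod_eq_iff ac_simps)
  then show "\<exists>\<tau> \<tau>'. shift_snd t z + \<tau> = z + \<tau>'" by blast
qed

lemma diff_along_pow_slice_fst:
  "(diff_along (\<lambda>x. x + t) ^^ k) (\<lambda>x. p (x, y)) x = (diff_along (shift_fst t) ^^ k) p (x, y)"
  by (induction k arbitrary: x) (simp_all add: diff_along_pow_Suc shift_fst_def del: funpow.simps)

lemma poly_fun_slice_fst:
  fixes p :: "'a::ab_semigroup_add \<times> 'b::ab_semigroup_add \<Rightarrow> 'c::field_char_0"
  assumes "poly_fun n p"
  shows "poly_fun n (\<lambda>x. p (x, y))"
  unfolding poly_fun_def diff_along_pow_slice_fst
  using diff_along_pow_poly_fun[OF translation_like_shift_fst assms] by blast

lemma continuous_on_slice_fst: "continuous_on UNIV p \<Longrightarrow> continuous_on UNIV (\<lambda>x. p (x, y))"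
  by (rule continuous_on_compose2[OF _ continuous_on_Pair[OF continuous_on_id continuous_on_const]]) auto

lemma continuous_on_slice_snd: "continuous_on UNIV p \<Longrightarrow> continuous_on UNIV (\<lambda>y. p (x, y))"
  by (rule continuous_on_compose2[OF _ continuous_on_Pair[OF continuous_on_const continuous_on_id]]) auto

lemma continuous_on_slice_diff_along_pow_shift_snd:
  fixes p :: "'a::topological_space \<times> 'b::{topological_space, ab_semigroup_add} \<Rightarrow> 'c::topological_ab_group_add"
  assumes "continuous_on UNIV p"
  shows "continuous_on UNIV (\<lambda>x. (diff_along (shift_snd t) ^^ k) p (x, y))"
proof (induction k arbitrary: y)
  case (Suc k)
  have eq: "(diff_along (shift_snd t) ^^ Suc k) p (x, y) =
        (diff_along (shift_snd t) ^^ k) p (x, y + t) - (diff_along (shift_snd t) ^^ k) p (x, y)" for x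
    by (simp only: diff_along_pow_Suc) (simp add: shift_snd_def)
  show ?case
    unfolding eq by (intro continuous_on_diff Suc.IH)
qed (simp add: continuous_on_slice_fst assms)

lemma Pn_zero: "(\<lambda>x. 0) \<in> Pn n"
  unfolding Pn_iff poly_fun_iff_rays using poly_seq_poly[of 0] by simp

lemma Pn_lin: "f \<in> Pn n \<Longrightarrow> g \<in> Pn n \<Longrightarrow> (\<lambda>x. c * f x + g x) \<in> Pn n"
  unfolding Pn_iff poly_fun_iff_rays
  by (auto intro!: poly_seq_add poly_seq_cmult continuous_on_add continuous_on_mult continuous_on_const)

lemma Pn_mono: "f \<in> Pn a \<Longrightarrow> a \<le> b \<Longrightarrow> f \<in> Pn b"
  unfolding Pn_iff poly_fun_iff_rays by (auto intro: poly_seq_mono)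

lemma Pn_sum:
  fixes N :: nat
  shows "(\<And>i. i < N \<Longrightarrow> F i \<in> Pn n) \<Longrightarrow> (\<lambda>z. \<Sum>i<N. F i z) \<in> Pn n"
proof (induction N)
  case (Suc N)
  then have "(\<lambda>z. 1 * F N z + (\<Sum>i<N. F i z)) \<in> Pn n"
    by (intro Pn_lin) auto
  then show ?case by (simp add: add.commute)
qed (simp add: Pn_zero)

lemma Pn_slice_fst: "p \<in> Pn n \<Longrightarrow> (\<lambda>x. p (x, y)) \<in> Pn n"
  unfolding Pn_iff by (simp add: continuous_on_slice_fst poly_fun_slice_fst)

lemma Pn_tensor:
  assumes "m \<le> n" "f \<in> Pn m" "g \<in> Pn (n - m)"
  shows "(\<lambda>z. f (fst z) * g (snd z)) \<in> Pn n"
proof -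
  have "continuous_on UNIV f" "continuous_on UNIV g"
    using assms unfolding Pn_iff by auto
  then have "continuous_on UNIV (\<lambda>z. f (fst z) * g (snd z))"
    by (intro continuous_on_mult continuous_on_compose2[OF _ continuous_on_fst]
        continuous_on_compose2[OF _ continuous_on_snd] continuous_on_id) auto
  moreover have "poly_seq n (\<lambda>k. f (fst (add_mult s k t)) * g (snd (add_mult s k t)))" for s t
  proof -
    have "poly_seq (m + (n - m)) (\<lambda>k. f (add_mult (fst s) k (fst t)) * g (add_mult (snd s) k (snd t)))"
      using assms unfolding Pn_iff poly_fun_iff_rays by (intro poly_seq_mult) auto
    then show ?thesis
      using assms(1) add_mult_Pair[of "fst s" "snd s" _ "fst t" "snd t"] by simp
  qed
  ultimately show ?thesis
    unfolding Pn_iff poly_fun_iff_rays by simp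
qed

lemma tensor_sum_subset_Pn:
  "(tensor_sum n :: ('a::{topological_space, ab_semigroup_add} \<times> 'b::{topological_space, ab_semigroup_add} \<Rightarrow> complex) set) \<subseteq> Pn n"
proof
  fix p :: "'a \<times> 'b \<Rightarrow> complex"
  assume "p \<in> tensor_sum n"
  then obtain N m and f :: "nat \<Rightarrow> 'a \<Rightarrow> complex" and g :: "nat \<Rightarrow> 'b \<Rightarrow> complex" where fg: "\<forall>i<N. m i \<le> n \<and> f i \<in> Pn (m i) \<and> g i \<in> Pn (n - m i)"
    and p: "p = (\<lambda>(s, t). \<Sum>i<N. f i s * g i t)"
    unfolding tensor_sum_def by blast
  have "(\<lambda>z. \<Sum>i<N. f i (fst z) * g i (snd z)) \<in> Pn n"
    by (intro Pn_sum) (use fg Pn_tensor in blast)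
  then show "p \<in> Pn n" by (simp add: p case_prod_beta')
qed

lemma tensor_sum_zero: "(\<lambda>z. 0) \<in> tensor_sum n"
  unfolding tensor_sum_def by (intro CollectI exI[of _ 0]) auto

lemma tensor_sum_add_tensor:
  fixes f :: "'a::{topological_space, ab_semigroup_add} \<Rightarrow> complex"
    and g :: "'b::{topological_space, ab_semigroup_add} \<Rightarrow> complex"
  assumes "q \<in> tensor_sum n" "k \<le> n" "f \<in> Pn k" "g \<in> Pn (n - k)"
  shows "(\<lambda>z. q z + f (fst z) * g (snd z)) \<in> tensor_sum n"
proof -
  obtain N m and ff :: "nat \<Rightarrow> 'a \<Rightarrow> complex" and gg :: "nat \<Rightarrow> 'b \<Rightarrow> complex" where H: "\<forall>i<N. m i \<le> n \<and> ff i \<in> Pn (m i) \<and> gg i \<in> Pn (n - m i)"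
    and q: "q = (\<lambda>(s, t). \<Sum>i<N. ff i s * gg i t)"
    using assms(1) unfolding tensor_sum_def by blast
  have "\<forall>i<Suc N. (m(N := k)) i \<le> n \<and> (ff(N := f)) i \<in> Pn ((m(N := k)) i)
      \<and> (gg(N := g)) i \<in> Pn (n - (m(N := k)) i)"
    using H assms by (auto simp: less_Suc_eq)
  moreover have "(\<lambda>z. q z + f (fst z) * g (snd z)) = (\<lambda>(s, t). \<Sum>i<Suc N. (ff(N := f)) i s * (gg(N := g)) i t)"
    by (auto simp: q fun_eq_iff)
  ultimately show ?thesis
    unfolding tensor_sum_def by blast
qed

section \<open>Combinations of point evaluations\<close>

text \<open>Unlike arbitrary linear functionals, finite combinations of point evaluations commute
  with taking slices of functions of two variables.\<close>

inductive eval_comb :: "(('a \<Rightarrow> 'b::comm_ring_1) \<Rightarrow> 'b) \<Rightarrow> bool" where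
  eval_comb_0: "eval_comb (\<lambda>f. 0)"
| eval_comb_add_point: "eval_comb l \<Longrightarrow> eval_comb (\<lambda>f. l f + c * f a)"

lemma eval_comb_zero: "eval_comb l \<Longrightarrow> l (\<lambda>x. 0) = 0"
  by (induction rule: eval_comb.induct) simp_all

lemma eval_comb_add_scaled: "eval_comb l \<Longrightarrow> l (\<lambda>x. c * f x + g x) = c * l f + l g"
  by (induction rule: eval_comb.induct) (simp_all add: algebra_simps)

lemma eval_comb_diff_scaled: "eval_comb l \<Longrightarrow> l (\<lambda>x. f x - c * g x) = l f - c * l g"
  by (induction rule: eval_comb.induct) (simp_all add: algebra_simps)

lemma eval_comb_sum: "eval_comb l \<Longrightarrow> l (\<lambda>x. \<Sum>i\<in>A. c i * g i x) = (\<Sum>i\<in>A. c i * l (g i))"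
  by (induction rule: eval_comb.induct) (simp_all add: algebra_simps sum.distrib sum_distrib_left)

lemma eval_comb_diff_comb:
  assumes "eval_comb l1" "eval_comb l2"
  shows "eval_comb (\<lambda>f. l1 f - c * l2 f)"
  using assms(2)
proof (induction rule: eval_comb.induct)
  case (eval_comb_add_point l d a)
  have "eval_comb (\<lambda>f. (l1 f - c * l f) + (- c * d) * f a)"
    using eval_comb_add_point.IH by (rule eval_comb.eval_comb_add_point)
  then show ?case by (simp add: algebra_simps)
qed (simp add: assms(1))

lemma eval_comb_diff_along_pow:
  "eval_comb (\<lambda>f :: 'a \<Rightarrow> 'b::comm_ring_1. (diff_along \<phi> ^^ k) f x)"
proof (induction k arbitrary: x)
  case 0
  show ?case using eval_comb_add_point[OF eval_comb_0, of 1] by simp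
next
  case (Suc k)
  have "eval_comb (\<lambda>f :: 'a \<Rightarrow> 'b. (diff_along \<phi> ^^ k) f (\<phi> x) - 1 * (diff_along \<phi> ^^ k) f x)"
    by (intro eval_comb_diff_comb Suc.IH)
  then show ?case by (simp add: diff_along_pow_Suc del: funpow.simps)
qed

lemma continuous_on_eval_comb_slice:
  fixes p :: "'a::topological_space \<times> 'b::topological_space \<Rightarrow> 'c::{comm_ring_1, real_normed_algebra}"
  assumes "eval_comb l" "continuous_on UNIV p"
  shows "continuous_on UNIV (\<lambda>y. l (\<lambda>x. p (x, y)))"
  using assms(1)
proof (induction rule: eval_comb.induct)
  case (eval_comb_add_point l c a)
  show ?case
    using eval_comb_add_point.IH continuous_on_slice_snd[OF assms(2), of a]
    by (intro continuous_on_add continuous_on_mult continuous_on_const)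
qed simp

lemma diff_along_pow_eval_comb_slice:
  assumes "eval_comb l"
  shows "(diff_along (\<lambda>y. y + t) ^^ k) (\<lambda>y. l (\<lambda>x. p (x, y))) y
       = l (\<lambda>x. (diff_along (shift_snd t) ^^ k) p (x, y))"
proof (induction k arbitrary: y)
  case (Suc k)
  have "(diff_along (\<lambda>y. y + t) ^^ Suc k) (\<lambda>y. l (\<lambda>x. p (x, y))) y
      = l (\<lambda>x. (diff_along (shift_snd t) ^^ k) p (x, y + t))
        - 1 * l (\<lambda>x. (diff_along (shift_snd t) ^^ k) p (x, y))"
    by (simp only: diff_along_pow_Suc Suc) simp
  also have "\<dots> = l (\<lambda>x. (diff_along (shift_snd t) ^^ Suc k) p (x, y))"
    by (simp only: eval_comb_diff_scaled[OF assms, symmetric] diff_along_pow_Suc) (simp add: shift_snd_def)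
  finally show ?case .
qed simp

definition fun_subspace :: "('a \<Rightarrow> 'b::comm_ring_1) set \<Rightarrow> bool" where
  "fun_subspace W \<longleftrightarrow> (\<lambda>x. 0) \<in> W \<and> (\<forall>f\<in>W. \<forall>g\<in>W. \<forall>c. (\<lambda>x. c * f x + g x) \<in> W)"

lemma fun_subspace_diff_scaled:
  assumes "fun_subspace W" "f \<in> W" "g \<in> W"
  shows "(\<lambda>x. f x - c * g x) \<in> W"
proof -
  have "(\<lambda>x. (- c) * g x + f x) \<in> W"
    using assms unfolding fun_subspace_def by blast
  then show ?thesis by (simp add: algebra_simps)
qed

lemma span_kernel_eval_comb:
  fixes v :: "'i \<Rightarrow> 'a \<Rightarrow> 'b::field"
  assumes "finite I" "eval_comb l" "w \<in> W" "l w = 1"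
    and span: "\<forall>f\<in>W. \<exists>c. f = (\<lambda>x. \<Sum>i\<in>I. c i * v i x)"
  obtains i0 where "i0 \<in> I"
    "\<forall>f\<in>W. l f = 0 \<longrightarrow> (\<exists>e. f = (\<lambda>x. \<Sum>i\<in>I - {i0}. e i * (v i x - l (v i) * w x)))"
proof -
  obtain c where c: "w = (\<lambda>x. \<Sum>i\<in>I. c i * v i x)"
    using span \<open>w \<in> W\<close> by blast
  have "\<exists>i0\<in>I. c i0 \<noteq> 0"
  proof (rule ccontr)
    assume "\<not> (\<exists>i0\<in>I. c i0 \<noteq> 0)"
    then have "w = (\<lambda>x. 0)" using c by simp
    then show False using \<open>l w = 1\<close> eval_comb_zero[OF \<open>eval_comb l\<close>] by simp
  qed
  then obtain i0 where i0: "i0 \<in> I" "c i0 \<noteq> 0" by blast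
  have "\<exists>e. f = (\<lambda>x. \<Sum>i\<in>I - {i0}. e i * (v i x - l (v i) * w x))" if "f \<in> W" "l f = 0" for f
  proof -
    obtain d where d: "f = (\<lambda>x. \<Sum>i\<in>I. d i * v i x)"
      using span \<open>f \<in> W\<close> by blast
    define \<kappa> where "\<kappa> = d i0 / c i0"
    define e where "e i = d i - \<kappa> * c i" for i
    have "(\<lambda>x. f x - \<kappa> * w x) = (\<lambda>x. \<Sum>i\<in>I. e i * v i x)"
      by (simp add: d c e_def sum_subtractf sum_distrib_left algebra_simps)
    also have "\<dots> = (\<lambda>x. \<Sum>i\<in>I - {i0}. e i * v i x)"
      using i0 \<open>finite I\<close> by (simp add: sum.remove e_def \<kappa>_def)
    finally have g: "(\<lambda>x. f x - \<kappa> * w x) = (\<lambda>x. \<Sum>i\<in>I - {i0}. e i * v i x)" .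
    have "l (\<lambda>x. f x - \<kappa> * w x) = - \<kappa>"
      using \<open>l f = 0\<close> \<open>l w = 1\<close> by (simp add: eval_comb_diff_scaled[OF \<open>eval_comb l\<close>])
    then have "f = (\<lambda>x. (f x - \<kappa> * w x) - l (\<lambda>x. f x - \<kappa> * w x) * w x)"
      by simp
    also have "\<dots> = (\<lambda>x. (\<Sum>i\<in>I - {i0}. e i * v i x) - l (\<lambda>x. \<Sum>i\<in>I - {i0}. e i * v i x) * w x)"
      by (simp only: g[unfolded fun_eq_iff, rule_format])
    also have "\<dots> = (\<lambda>x. \<Sum>i\<in>I - {i0}. e i * (v i x - l (v i) * w x))"
      by (simp add: eval_comb_sum[OF \<open>eval_comb l\<close>] right_diff_distrib sum_subtractf
          sum_distrib_right mult.assoc)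
    finally show ?thesis by blast
  qed
  then show thesis using i0 that by blast
qed

lemma eval_comb_complement:
  fixes v :: "'i \<Rightarrow> 'a \<Rightarrow> 'b::field"
  assumes "finite I" "fun_subspace W"
    and "\<forall>f\<in>W. \<exists>c. f = (\<lambda>x. \<Sum>i\<in>I. c i * v i x)"
    and "\<forall>w\<in>W. w \<notin> U \<longrightarrow> (\<exists>l. eval_comb l \<and> (\<forall>u\<in>U. l u = 0) \<and> l w = 1)"
  shows "\<exists>L. (\<forall>(l, w)\<in>set L. eval_comb l \<and> (\<forall>u\<in>U. l u = 0) \<and> w \<in> W)
           \<and> (\<forall>f\<in>W. (\<lambda>x. f x - (\<Sum>(l, w)\<leftarrow>L. l f * w x)) \<in> U)"
  using assms
proof (induction "card I" arbitrary: I v W rule: less_induct)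
  case less
  show ?case
  proof (cases "W \<subseteq> U")
    case True
    then show ?thesis by (intro exI[of _ "[]"]) auto
  next
    case False
    then obtain w l0 where w: "w \<in> W" "w \<notin> U"
      and l0: "eval_comb l0" "\<forall>u\<in>U. l0 u = 0" "l0 w = 1"
      using less.prems(4) by blast
    obtain i0 where i0: "i0 \<in> I"
      and span': "\<forall>f\<in>W. l0 f = 0 \<longrightarrow> (\<exists>e. f = (\<lambda>x. \<Sum>i\<in>I - {i0}. e i * (v i x - l0 (v i) * w x)))"
      using span_kernel_eval_comb[OF less.prems(1) l0(1) w(1) l0(3) less.prems(3)] by blast
    define W' where "W' = {f \<in> W. l0 f = 0}"
    have "fun_subspace W'"
      using less.prems(2) unfolding fun_subspace_def W'_def
      by (auto simp: eval_comb_add_scaled[OF l0(1)] eval_comb_zero[OF l0(1)])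
    moreover have "card (I - {i0}) < card I"
      using less.prems(1) i0 by (rule card_Diff1_less)
    ultimately obtain L' where L': "\<forall>(l, w')\<in>set L'. eval_comb l \<and> (\<forall>u\<in>U. l u = 0) \<and> w' \<in> W'"
      "\<forall>f\<in>W'. (\<lambda>x. f x - (\<Sum>(l, w')\<leftarrow>L'. l f * w' x)) \<in> U"
      using less.hyps[of "I - {i0}" W' "\<lambda>i x. v i x - l0 (v i) * w x"] less.prems(1,4) span'
      unfolding W'_def by auto
    define L where "L = (l0, w) # map (\<lambda>(l, w'). (\<lambda>f. l f - l w * l0 f, w')) L'"
    have "\<forall>(l, w')\<in>set L. eval_comb l \<and> (\<forall>u\<in>U. l u = 0) \<and> w' \<in> W"
      using L' l0 w unfolding L_def W'_def by (auto intro: eval_comb_diff_comb)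
    moreover have "(\<lambda>x. f x - (\<Sum>(l, w')\<leftarrow>L. l f * w' x)) \<in> U" if "f \<in> W" for f
    proof -
      define f' where "f' = (\<lambda>x. f x - l0 f * w x)"
      have "f' \<in> W'"
        using fun_subspace_diff_scaled[OF less.prems(2) \<open>f \<in> W\<close> w(1)] l0(3)
        unfolding W'_def f'_def by (simp add: eval_comb_diff_scaled[OF l0(1)])
      then have "(\<lambda>x. f' x - (\<Sum>(l, w')\<leftarrow>L'. l f' * w' x)) \<in> U"
        using L'(2) by blast
      moreover have "(\<Sum>(l, w')\<leftarrow>L. l f * w' x) = l0 f * w x + (\<Sum>(l, w')\<leftarrow>L'. l f' * w' x)" for x
      proof -
        have "l f - l w * l0 f = l f'" if "eval_comb l" for l
          unfolding f'_def using eval_comb_diff_scaled[OF that] by simp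
        then have map_eq: "map (\<lambda>(l, w'). (l f - l w * l0 f) * w' x) L' = map (\<lambda>(l, w'). l f' * w' x) L'"
          using L'(1) by (intro map_cong) auto
        have "(\<Sum>(l, w')\<leftarrow>L. l f * w' x) = l0 f * w x + sum_list (map (\<lambda>(l, w'). (l f - l w * l0 f) * w' x) L')"
          by (simp add: L_def o_def split_def)
        then show ?thesis
          unfolding map_eq .
      qed
      ultimately show ?thesis
        by (simp add: f'_def algebra_simps)
    qed
    ultimately show ?thesis by blast
  qed
qed

section \<open>Splitting off tensor products\<close>

fun Pn_lt :: "nat \<Rightarrow> ('a::{topological_space, ab_semigroup_add} \<Rightarrow> complex) set" where
  "Pn_lt 0 = {\<lambda>x. 0}"
| "Pn_lt (Suc d) = Pn d"

lemma fun_subspace_Pn: "fun_subspace (Pn n)"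
  unfolding fun_subspace_def using Pn_zero Pn_lin by blast

lemma eval_comb_separates_Pn_lt:
  assumes "w \<in> Pn d" "w \<notin> Pn_lt d"
  shows "\<exists>l. eval_comb l \<and> (\<forall>u\<in>Pn_lt d. l u = 0) \<and> l w = 1"
proof (cases d)
  case 0
  then obtain a where a: "w a \<noteq> 0"
    using assms(2) by fastforce
  have "eval_comb (\<lambda>f. 0 + (1 / w a) * f a)"
    by (rule eval_comb_add_point[OF eval_comb_0])
  then show ?thesis
    using 0 a by (intro exI[of _ "\<lambda>f. 0 + (1 / w a) * f a"]) simp
next
  case (Suc d')
  then have "\<not> poly_fun d' w"
    using assms by (simp add: Pn_iff)
  then obtain t x where "(diff_along (\<lambda>x. x + t) ^^ Suc d') w x \<noteq> 0"
    unfolding poly_fun_def by blast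
  moreover define l where
    "l = (\<lambda>f. 0 - (- 1 / (diff_along (\<lambda>x. x + t) ^^ Suc d') w x) * (diff_along (\<lambda>x. x + t) ^^ Suc d') f x)"
  ultimately have "l w = 1" by simp
  moreover have "eval_comb l"
    unfolding l_def by (intro eval_comb_diff_comb eval_comb_0 eval_comb_diff_along_pow)
  moreover have "l u = 0" if "u \<in> Pn_lt d" for u
  proof -
    have "poly_fun d' u"
      using that Suc by (simp add: Pn_iff)
    then show ?thesis
      unfolding l_def poly_fun_def by simp
  qed
  ultimately show ?thesis by blast
qed

lemma slice_diff_along_pow_shift_snd_Pn_lt:
  assumes "p \<in> Pn n" "d \<le> n"
  shows "(\<lambda>x. (diff_along (shift_snd t) ^^ Suc (n - d)) p (x, y)) \<in> Pn_lt d"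
proof (cases d)
  case 0
  have "(diff_along (shift_snd t) ^^ Suc n) p (x, y) = 0" for x
    using assms(1) diff_along_pow_poly_fun[OF translation_like_shift_snd] unfolding Pn_iff by blast
  then show ?thesis
    using 0 by (simp add: fun_eq_iff del: funpow.simps)
next
  case (Suc d')
  have "poly_fun ((n - d') + d') p"
    using assms Suc unfolding Pn_iff by simp
  then have "poly_fun d' ((diff_along (shift_snd t) ^^ (n - d')) p)"
    using poly_fun_diff_along_pow[OF poly_fun_diff_translation_like[OF translation_like_shift_snd]]
    by blast
  then have "poly_fun d' (\<lambda>x. (diff_along (shift_snd t) ^^ (n - d')) p (x, y))"
    by (rule poly_fun_slice_fst)
  moreover have "continuous_on UNIV (\<lambda>x. (diff_along (shift_snd t) ^^ (n - d')) p (x, y))"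
    using assms(1) unfolding Pn_iff by (simp add: continuous_on_slice_diff_along_pow_shift_snd)
  moreover have "Suc (n - d) = n - d'"
    using assms(2) Suc by simp
  ultimately show ?thesis
    using Suc by (simp add: Pn_iff)
qed

lemma Pn_splits_off_Pn_lt:
  assumes "fin_dim_fun (Pn n :: ('a::{topological_space, ab_semigroup_add} \<Rightarrow> complex) set)" "d \<le> n"
  obtains L :: "((('a::{topological_space, ab_semigroup_add} \<Rightarrow> complex) \<Rightarrow> complex) \<times> ('a \<Rightarrow> complex)) list"
  where "\<forall>(l, w)\<in>set L. eval_comb l \<and> (\<forall>u\<in>Pn_lt d. l u = 0) \<and> w \<in> Pn d"
    and "\<forall>f\<in>Pn d. (\<lambda>x. f x - (\<Sum>(l, w)\<leftarrow>L. l f * w x)) \<in> Pn_lt d"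
proof -
  obtain F :: "('a \<Rightarrow> complex) set" where "finite F"
    and F: "\<forall>f\<in>Pn n. \<exists>c. f = (\<lambda>x. \<Sum>g\<in>F. c g * g x)"
    using assms(1) unfolding fin_dim_fun_def by blast
  have span: "\<forall>f\<in>Pn d. \<exists>c. f = (\<lambda>x. \<Sum>g\<in>F. c g * id g x)"
    using F Pn_mono[OF _ assms(2)] by (simp only: id_apply) blast
  have sep: "\<forall>w\<in>Pn d. w \<notin> Pn_lt d \<longrightarrow> (\<exists>l. eval_comb l \<and> (\<forall>u\<in>Pn_lt d. l u = 0) \<and> l w = 1)"
    using eval_comb_separates_Pn_lt by blast
  show thesis
    using eval_comb_complement[OF \<open>finite F\<close> fun_subspace_Pn span sep] by (elim exE conjE) (rule that)
qed

lemma eval_comb_slice_Pn: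
  fixes p :: "'a::{topological_space, ab_semigroup_add} \<times> 'b::{topological_space, ab_semigroup_add} \<Rightarrow> complex"
  assumes "eval_comb l" "\<forall>u\<in>Pn_lt d. l u = 0" "p \<in> Pn n" "d \<le> n"
  shows "(\<lambda>y. l (\<lambda>x. p (x, y))) \<in> Pn (n - d)"
  unfolding Pn_iff poly_fun_def
proof (intro conjI allI)
  show "continuous_on UNIV (\<lambda>y. l (\<lambda>x. p (x, y)))"
    using assms(1,3) unfolding Pn_iff by (simp add: continuous_on_eval_comb_slice)
  show "(diff_along (\<lambda>y. y + t) ^^ Suc (n - d)) (\<lambda>y. l (\<lambda>x. p (x, y))) y = 0" for t y
    unfolding diff_along_pow_eval_comb_slice[OF assms(1)]
    using assms(2) slice_diff_along_pow_shift_snd_Pn_lt[OF assms(3,4)] by blast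
qed

lemma tensor_sum_add_sum_list:
  fixes p :: "'a::{topological_space, ab_semigroup_add} \<times> 'b::{topological_space, ab_semigroup_add} \<Rightarrow> complex"
  assumes "d \<le> n" "\<forall>(l, w)\<in>set L. w \<in> Pn d \<and> (\<lambda>y. l (\<lambda>x. p (x, y))) \<in> Pn (n - d)"
  shows "q \<in> tensor_sum n \<Longrightarrow> (\<lambda>z. q z + (\<Sum>(l, w)\<leftarrow>L. l (\<lambda>x. p (x, snd z)) * w (fst z))) \<in> tensor_sum n"
  using assms(2)
proof (induction L arbitrary: q)
  case (Cons lw L)
  obtain l w where lw: "lw = (l, w)" by fastforce
  have "(\<lambda>z. q z + w (fst z) * l (\<lambda>x. p (x, snd z))) \<in> tensor_sum n"
    using Cons.prems assms(1) lw by (intro tensor_sum_add_tensor) auto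
  then have "(\<lambda>z. (q z + w (fst z) * l (\<lambda>x. p (x, snd z)))
      + (\<Sum>(l, w)\<leftarrow>L. l (\<lambda>x. p (x, snd z)) * w (fst z))) \<in> tensor_sum n"
    using Cons.prems by (intro Cons.IH) auto
  then show ?case by (simp add: lw algebra_simps)
qed simp

lemma tensor_sum_if_slices_Pn_lt:
  fixes p :: "'a::{topological_space, ab_semigroup_add} \<times> 'b::{topological_space, ab_semigroup_add} \<Rightarrow> complex"
  assumes fin: "fin_dim_fun (Pn n :: ('a \<Rightarrow> complex) set)"
  shows "k \<le> Suc n \<Longrightarrow> p \<in> Pn n \<Longrightarrow> \<forall>y. (\<lambda>x. p (x, y)) \<in> Pn_lt k \<Longrightarrow> p \<in> tensor_sum n"
proof (induction k arbitrary: p)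
  case 0
  then have "p = (\<lambda>z. 0)" by (auto simp: fun_eq_iff)
  then show ?case using tensor_sum_zero by simp
next
  case (Suc d)
  have "d \<le> n" using Suc.prems(1) by simp
  obtain L :: "((('a \<Rightarrow> complex) \<Rightarrow> complex) \<times> ('a \<Rightarrow> complex)) list"
    where L: "\<forall>(l, w)\<in>set L. eval_comb l \<and> (\<forall>u\<in>Pn_lt d. l u = 0) \<and> w \<in> Pn d"
    and L_compl: "\<forall>f\<in>Pn d. (\<lambda>x. f x - (\<Sum>(l, w)\<leftarrow>L. l f * w x)) \<in> Pn_lt d"
    by (rule Pn_splits_off_Pn_lt[OF fin \<open>d \<le> n\<close>])
  have L_Pn: "\<forall>(l, w)\<in>set L. w \<in> Pn d \<and> (\<lambda>y. l (\<lambda>x. p (x, y))) \<in> Pn (n - d)"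
    using L eval_comb_slice_Pn[OF _ _ Suc.prems(2) \<open>d \<le> n\<close>] by auto
  define S where "S = (\<lambda>z. \<Sum>(l, w)\<leftarrow>L. l (\<lambda>x. p (x, snd z)) * w (fst z))"
  have "S \<in> tensor_sum n"
    using tensor_sum_add_sum_list[OF \<open>d \<le> n\<close> L_Pn tensor_sum_zero] by (simp add: S_def)
  then have "(\<lambda>z. (- 1) * S z + p z) \<in> Pn n"
    using tensor_sum_subset_Pn Suc.prems(2) by (blast intro: Pn_lin)
  moreover have "\<forall>y. (\<lambda>x. p (x, y) - S (x, y)) \<in> Pn_lt d"
    using Suc.prems(3) L_compl by (simp add: S_def)
  ultimately have "(\<lambda>z. p z - S z) \<in> tensor_sum n"
    using Suc.IH Suc.prems(1) by simp
  from tensor_sum_add_sum_list[OF \<open>d \<le> n\<close> L_Pn this]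
  show ?case by (simp add: S_def)
qed

theorem lemma3p2:
  fixes n :: nat
  assumes "top_ab_semigroup TYPE('a::{topological_space, ab_semigroup_add})"
      and "top_ab_semigroup TYPE('b::{topological_space, ab_semigroup_add})"
      and "fin_dim_fun (Pn n :: ('a \<Rightarrow> complex) set)"
  shows "(Pn n :: ('a \<times> 'b \<Rightarrow> complex) set) = tensor_sum n"
proof
  show "Pn n \<subseteq> (tensor_sum n :: ('a \<times> 'b \<Rightarrow> complex) set)"
  proof
    fix p :: "'a \<times> 'b \<Rightarrow> complex"
    assume "p \<in> Pn n"
    moreover have "\<forall>y. (\<lambda>x. p (x, y)) \<in> Pn_lt (Suc n)"
      using \<open>p \<in> Pn n\<close> by (simp add: Pn_slice_fst)
    ultimately show "p \<in> tensor_sum n"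
      using tensor_sum_if_slices_Pn_lt[OF assms(3)] by blast
  qed
qed (rule tensor_sum_subset_Pn)

end
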